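(* Let $\bm{G}_t\in\mathbb{R}^{n_1\times n_2}$ and $\epsilon_t>0$, and let $\bm{L}_t=\epsilon_t\bm{I}_{n_1}+\mathrm{diag}(\bm{G}_t\bm{G}_t^T)$, $\bm{R}_t=\epsilon_t\bm{I}_{n_2}+\mathrm{diag}(\bm{G}_t^T\bm{G}_t)$. Then for every $\bm{Z}\in\mathbb{R}^{n_1\times n_2}$, $$\nu_t\|\bm{Z}\|_F^2\le\|\bm{Z}\|_{\mathcal{W}_t}^2\le\mu_t\|\bm{Z}\|_F^2,$$ where $\nu_t=\epsilon_t^{1/2}$ and $\mu_t=(\epsilon_t+\|\bm{G}_t\|_\vee^2)^{1/2}$.
   Context: $\mathrm{diag}(\bm{M})$ is the diagonal matrix with the diagonal entries of $\bm{M}$. $\|\bm{Z}\|_{\mathcal{W}_t}^2=\langle\bm{L}_t^{1/4}\bm{Z}\bm{R}_t^{1/4},\bm{Z}\rangle$ with $\langle\bm{A},\bm{B}\rangle=\mathrm{trace}(\bm{A}^T\bm{B})$. $\|\bm{Z}\|_\vee=\max\{\max_i\|\bm{Z}(i,:)\|_2,\max_j\|\bm{Z}(:,j)\|_2\}$ (largest Euclidean norm of a row or column). In the paper $\bm{G}_t=\mathcal{A}^*(\mathcal{A}\bm{X}_t-\bm{y})$ is the gradient at the current iterate. *)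

theory Defs
  imports "HOL-Analysis.Analysis"
begin

definition diag :: "real^'n^'n \<Rightarrow> real^'n^'n" where
  "diag M = (\<chi> i j. if i = j then M $ i $ i else 0)"

(* Real power of a diagonal matrix with positive diagonal: the unique positive
   definite p-th power, i.e. entrywise powr on the diagonal. Only applied to
   diagonal positive-definite matrices (L_t, R_t). *)
definition diag_powr :: "real^'n^'n \<Rightarrow> real \<Rightarrow> real^'n^'n" where
  "diag_powr D p = (\<chi> i j. if i = j then (D $ i $ i) powr p else 0)"

definition frob_inner :: "real^'n^'m \<Rightarrow> real^'n^'m \<Rightarrow> real" where
  "frob_inner A B = trace (transpose A ** B)"

definition frob_norm_sq :: "real^'n^'m \<Rightarrow> real" where
  "frob_norm_sq Z = frob_inner Z Z"

definition vee_norm :: "real^'n^'m \<Rightarrow> real" where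
  "vee_norm Z = max (Max {norm (row i Z) | i. True}) (Max {norm (column j Z) | j. True})"

definition W_norm_sq :: "real^'m^'m \<Rightarrow> real^'n^'n \<Rightarrow> real^'n^'m \<Rightarrow> real" where
  "W_norm_sq L R Z = frob_inner (diag_powr L (1/4) ** Z ** diag_powr R (1/4)) Z"

end

theory Submission
  imports Defs
begin

text \<open>All weight matrices are diagonal, so the weighted norm is the Frobenius norm with
  entry (i,j) weighted by (L_ii R_jj)^(1/4). Since L_ii = \<epsilon> + |G(i,:)|^2 and
  R_jj = \<epsilon> + |G(:,j)|^2 both lie between \<epsilon> and \<epsilon> + |G|_vee^2, every weight lies
  between the square roots of these two numbers.\<close>

lemma frob_inner_eq_sum: "frob_inner A B = (\<Sum>i\<in>UNIV. \<Sum>j\<in>UNIV. A$i$j * B$i$j)"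
proof -
  have "frob_inner A B = (\<Sum>j\<in>UNIV. \<Sum>i\<in>UNIV. A$i$j * B$i$j)"
    unfolding frob_inner_def trace_def matrix_matrix_mult_def transpose_def by simp
  also have "\<dots> = (\<Sum>i\<in>UNIV. \<Sum>j\<in>UNIV. A$i$j * B$i$j)"
    by (rule sum.swap)
  finally show ?thesis .
qed

lemma frob_norm_sq_eq_sum: "frob_norm_sq Z = (\<Sum>i\<in>UNIV. \<Sum>j\<in>UNIV. (Z$i$j)\<^sup>2)"
  unfolding frob_norm_sq_def frob_inner_eq_sum by (simp add: power2_eq_square)

lemma diag_powr_mult_nth: "(diag_powr D p ** Z) $ i $ j = (D$i$i) powr p * Z$i$j"
  unfolding matrix_matrix_mult_def diag_powr_def
  by (simp add: if_distrib if_distribR cong: if_cong)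

lemma mult_diag_powr_nth: "(Z ** diag_powr D p) $ i $ j = Z$i$j * (D$j$j) powr p"
  unfolding matrix_matrix_mult_def diag_powr_def
  by (simp add: if_distrib if_distribR cong: if_cong)

lemma W_norm_sq_eq_weighted_sum:
  "W_norm_sq L R Z = (\<Sum>i\<in>UNIV. \<Sum>j\<in>UNIV. ((L$i$i) powr (1/4) * (R$j$j) powr (1/4)) * (Z$i$j)\<^sup>2)"
  unfolding W_norm_sq_def frob_inner_eq_sum mult_diag_powr_nth diag_powr_mult_nth
  by (simp add: power2_eq_square mult_ac)

lemma W_norm_sq_bounds:
  assumes "\<And>i j. a \<le> (L$i$i) powr (1/4) * (R$j$j) powr (1/4)"
    and "\<And>i j. (L$i$i) powr (1/4) * (R$j$j) powr (1/4) \<le> b"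
  shows "a * frob_norm_sq Z \<le> W_norm_sq L R Z \<and> W_norm_sq L R Z \<le> b * frob_norm_sq Z"
  unfolding W_norm_sq_eq_weighted_sum frob_norm_sq_eq_sum sum_distrib_left
  using assms by (auto intro!: sum_mono mult_right_mono)

lemma sqrt_le_powr_quarter_mult:
  fixes x y z :: real
  assumes "0 \<le> x" "x \<le> y" "x \<le> z"
  shows "sqrt x \<le> y powr (1/4) * z powr (1/4)"
proof -
  have "sqrt x = x powr (1/4) * x powr (1/4)"
    using assms(1) by (simp add: powr_add[symmetric] powr_half_sqrt[symmetric])
  also have "\<dots> \<le> y powr (1/4) * z powr (1/4)"
    using assms by (intro mult_mono powr_mono2) auto
  finally show ?thesis .
qed

lemma powr_quarter_mult_le_sqrt:
  fixes y z w :: real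
  assumes "0 \<le> y" "0 \<le> z" "y \<le> w" "z \<le> w"
  shows "y powr (1/4) * z powr (1/4) \<le> sqrt w"
proof -
  have "y powr (1/4) * z powr (1/4) \<le> w powr (1/4) * w powr (1/4)"
    using assms by (intro mult_mono powr_mono2) auto
  also have "\<dots> = sqrt w"
    using assms by (simp add: powr_add[symmetric] powr_half_sqrt[symmetric])
  finally show ?thesis .
qed

lemma scaleR_mat_1_plus_diag_nth: "(c *\<^sub>R mat 1 + diag M) $ i $ i = c + M$i$i"
  by (simp add: diag_def mat_def)

lemma mult_transpose_diagonal_nth: "(A ** transpose A) $ i $ i = (norm (row i A))\<^sup>2"
  unfolding matrix_matrix_mult_def transpose_def row_def norm_vec_def L2_set_def
  by (simp add: sum_nonneg power2_eq_square)

lemma transpose_mult_diagonal_nth: "(transpose A ** A) $ j $ j = (norm (column j A))\<^sup>2"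
  unfolding matrix_matrix_mult_def transpose_def column_def norm_vec_def L2_set_def
  by (simp add: sum_nonneg power2_eq_square)

lemma norm_row_le_vee_norm: "norm (row i A) \<le> vee_norm A"
proof -
  have "norm (row i A) \<le> Max {norm (row i A) | i. True}"
    by (rule Max_ge) (auto simp: full_SetCompr_eq)
  then show ?thesis
    unfolding vee_norm_def by linarith
qed

lemma norm_column_le_vee_norm: "norm (column j A) \<le> vee_norm A"
proof -
  have "norm (column j A) \<le> Max {norm (column j A) | j. True}"
    by (rule Max_ge) (auto simp: full_SetCompr_eq)
  then show ?thesis
    unfolding vee_norm_def by linarith
qed

theorem lemma3p3:
  fixes G Z :: "real^'n2^'n1" and \<epsilon> :: real
  assumes "\<epsilon> > 0"
  defines "L \<equiv> \<epsilon> *\<^sub>R mat 1 + diag (G ** transpose G)"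
      and "R \<equiv> \<epsilon> *\<^sub>R mat 1 + diag (transpose G ** G)"
  shows "sqrt \<epsilon> * frob_norm_sq Z \<le> W_norm_sq L R Z
       \<and> W_norm_sq L R Z \<le> sqrt (\<epsilon> + (vee_norm G)\<^sup>2) * frob_norm_sq Z"
proof (rule W_norm_sq_bounds)
  have L_diag: "L$i$i = \<epsilon> + (norm (row i G))\<^sup>2" for i
    unfolding L_def scaleR_mat_1_plus_diag_nth mult_transpose_diagonal_nth ..
  have R_diag: "R$j$j = \<epsilon> + (norm (column j G))\<^sup>2" for j
    unfolding R_def scaleR_mat_1_plus_diag_nth transpose_mult_diagonal_nth ..
  fix i j
  show "sqrt \<epsilon> \<le> (L$i$i) powr (1/4) * (R$j$j) powr (1/4)"
    unfolding L_diag R_diag using assms(1) by (intro sqrt_le_powr_quarter_mult) auto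
  show "(L$i$i) powr (1/4) * (R$j$j) powr (1/4) \<le> sqrt (\<epsilon> + (vee_norm G)\<^sup>2)"
    unfolding L_diag R_diag using assms(1)
    by (intro powr_quarter_mult_le_sqrt add_left_mono power_mono
        norm_row_le_vee_norm norm_column_le_vee_norm) auto
qed

end
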